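(* Let $k$ be a positive integer, let $G$ be a multigraph, and let $A,B$ be nonempty sets of vertices such that $A$ is contained in one equivalence class of $\sim_k$ and $B$ is contained in a different equivalence class of $\sim_k$. Then there is a set $X$ of at most $k-1$ edges of $G$ such that $G-X$ contains no $A$--$B$-path (i.e., $X$ separates $A$ and $B$).
   Context: For vertices $u,v$ of a multigraph $G$, $u\sim_k v$ means that either $u=v$ or there are $k$ pairwise edge-disjoint $u$--$v$-paths in $G$; this is an equivalence relation on $V(G)$. $G-X$ denotes $G$ with the edges of $X$ deleted. *)

theory Defs
  imports Main
begin

text \<open>Parallel edges are distinct elements of E.\<close>

definition multigraph :: "'v set \<Rightarrow> 'e set \<Rightarrow> ('e \<Rightarrow> 'v \<times> 'v) \<Rightarrow> bool" where
  "multigraph V E ends \<longleftrightarrow> finite V \<and> finite E \<and>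
     (\<forall>e\<in>E. fst (ends e) \<in> V \<and> snd (ends e) \<in> V)"

definition joins :: "('e \<Rightarrow> 'v \<times> 'v) \<Rightarrow> 'e \<Rightarrow> 'v \<Rightarrow> 'v \<Rightarrow> bool" where
  "joins ends e x y \<longleftrightarrow> ends e = (x, y) \<or> ends e = (y, x)"

definition is_path :: "'v set \<Rightarrow> 'e set \<Rightarrow> ('e \<Rightarrow> 'v \<times> 'v) \<Rightarrow> 'v list \<Rightarrow> 'e list \<Rightarrow> bool" where
  "is_path V E ends vs es \<longleftrightarrow> vs \<noteq> [] \<and> set vs \<subseteq> V \<and> distinct vs \<and> set es \<subseteq> E \<and>
     length es + 1 = length vs \<and>
     (\<forall>i < length es. joins ends (es ! i) (vs ! i) (vs ! Suc i))"

definition is_uv_path :: "'v set \<Rightarrow> 'e set \<Rightarrow> ('e \<Rightarrow> 'v \<times> 'v) \<Rightarrow> 'v \<Rightarrow> 'v \<Rightarrow> 'v list \<Rightarrow> 'e list \<Rightarrow> bool" where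
  "is_uv_path V E ends u v vs es \<longleftrightarrow> is_path V E ends vs es \<and> hd vs = u \<and> last vs = v"

definition k_equiv :: "'v set \<Rightarrow> 'e set \<Rightarrow> ('e \<Rightarrow> 'v \<times> 'v) \<Rightarrow> nat \<Rightarrow> 'v \<Rightarrow> 'v \<Rightarrow> bool" where
  "k_equiv V E ends k u v \<longleftrightarrow> u = v \<or>
     (\<exists>P :: nat \<Rightarrow> 'v list \<times> 'e list.
        (\<forall>i<k. is_uv_path V E ends u v (fst (P i)) (snd (P i))) \<and>
        (\<forall>i<k. \<forall>j<k. i \<noteq> j \<longrightarrow> set (snd (P i)) \<inter> set (snd (P j)) = {}))"

definition has_AB_path :: "'v set \<Rightarrow> 'e set \<Rightarrow> ('e \<Rightarrow> 'v \<times> 'v) \<Rightarrow> 'v set \<Rightarrow> 'v set \<Rightarrow> bool" where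
  "has_AB_path V E ends A B \<longleftrightarrow>
     (\<exists>a\<in>A. \<exists>b\<in>B. \<exists>vs es. is_uv_path V E ends a b vs es)"

end

theory Submission
  imports Defs "HOL-Library.Transitive_Closure_Table"
begin

text \<open>Fix \<open>a \<in> A\<close> and \<open>b \<in> B\<close>; they are not \<open>k\<close>-equivalent, so the edge version of Menger's
  theorem gives a set \<open>X\<close> of fewer than \<open>k\<close> edges separating \<open>a\<close> from \<open>b\<close>. For that, augment a
  unit-capacity \<open>a\<close>--\<open>b\<close> flow along residual paths. A flow of value \<open>k\<close> would decompose into \<open>k\<close>
  edge-disjoint paths, so augmentation gets stuck at some value \<open>j < k\<close>; then every edge leaving
  the set of vertices reachable from \<open>a\<close> in the residual graph carries flow out of it, so there
  are at most \<open>j\<close> such edges. Every \<open>a' \<in> A\<close> is joined to \<open>a\<close> by \<open>k\<close> edge-disjoint paths, one of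
  which avoids \<open>X\<close>, and likewise every \<open>b' \<in> B\<close> stays connected to \<open>b\<close> in \<open>G - X\<close>; so an
  \<open>A\<close>--\<open>B\<close> path in \<open>G - X\<close> would connect \<open>a\<close> to \<open>b\<close>.\<close>

lemma pigeonhole_disjoint_family:
  assumes "finite X" "card X < k"
    and "\<forall>i<k. \<forall>j<k. i \<noteq> j \<longrightarrow> S i \<inter> S j = {}"
  shows "\<exists>i<k. S i \<inter> X = {}"
proof (rule ccontr)
  assume "\<not> ?thesis"
  then have "\<forall>i\<in>{..<k}. \<exists>x. x \<in> S i \<inter> X" by blast
  then obtain f where f: "\<forall>i\<in>{..<k}. f i \<in> S i \<inter> X" by (metis bchoice)
  have "inj_on f {..<k}"
  proof (rule inj_onI)
    fix i j assume ij: "i \<in> {..<k}" "j \<in> {..<k}" "f i = f j"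
    then have "f i \<in> S i \<inter> S j" using f by (metis IntD1 IntI)
    with ij(1,2) assms(3) show "i = j" by blast
  qed
  moreover have "f ` {..<k} \<subseteq> X" using f by blast
  ultimately have "card {..<k} \<le> card X" using assms(1) by (rule card_inj_on_le)
  with assms(2) show False by simp
qed

locale finite_multigraph =
  fixes V :: "'v set" and E :: "'e set" and ends :: "'e \<Rightarrow> 'v \<times> 'v"
  assumes multigraph: "multigraph V E ends"
begin

lemma finite_V: "finite V" and finite_E: "finite E"
  using multigraph by (auto simp: multigraph_def)

definition adjacent :: "'e set \<Rightarrow> 'v \<Rightarrow> 'v \<Rightarrow> bool" where
  "adjacent E' x y \<longleftrightarrow> (\<exists>e\<in>E'. joins ends e x y)"

lemma uv_path_connected:
  assumes "is_uv_path V E' ends u v vs es"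
  shows "(adjacent E')\<^sup>*\<^sup>* u v"
proof -
  have p: "vs \<noteq> []" "length es + 1 = length vs" "set es \<subseteq> E'"
    "\<forall>i < length es. joins ends (es ! i) (vs ! i) (vs ! Suc i)"
    using assms unfolding is_uv_path_def is_path_def by blast+
  have "(adjacent E')\<^sup>*\<^sup>* (vs ! 0) (vs ! i)" if "i < length vs" for i
    using that
  proof (induction i)
    case (Suc i)
    then have "i < length es" using p(2) by simp
    then have "adjacent E' (vs ! i) (vs ! Suc i)"
      using p(3,4) nth_mem unfolding adjacent_def by blast
    with Suc show ?case by simp
  qed simp
  then have "(adjacent E')\<^sup>*\<^sup>* (vs ! 0) (vs ! (length vs - 1))"
    using p(1) by simp
  moreover have "vs ! 0 = u" "vs ! (length vs - 1) = v"
    using assms p(1) unfolding is_uv_path_def by (simp_all add: hd_conv_nth last_conv_nth)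
  ultimately show ?thesis by simp
qed

definition edge_disjoint_paths :: "'v \<Rightarrow> 'v \<Rightarrow> nat \<Rightarrow> (nat \<Rightarrow> 'v list \<times> 'e list) \<Rightarrow> bool" where
  "edge_disjoint_paths u v k P \<longleftrightarrow>
     (\<forall>i<k. is_uv_path V E ends u v (fst (P i)) (snd (P i))) \<and>
     (\<forall>i<k. \<forall>j<k. i \<noteq> j \<longrightarrow> set (snd (P i)) \<inter> set (snd (P j)) = {})"

lemma k_equiv_iff_edge_disjoint_paths:
  "k_equiv V E ends k u v \<longleftrightarrow> u = v \<or> (\<exists>P. edge_disjoint_paths u v k P)"
  unfolding k_equiv_def edge_disjoint_paths_def ..

lemma edge_disjoint_paths_extend:
  assumes "edge_disjoint_paths u v k P" "is_uv_path V E ends u v vs es"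
    and "\<forall>i<k. set (snd (P i)) \<inter> set es = {}"
  shows "edge_disjoint_paths u v (Suc k) (P(k := (vs, es)))"
  using assms unfolding edge_disjoint_paths_def
  by (auto simp: less_Suc_eq)

lemma k_equiv_connected_after_deletion:
  assumes "k_equiv V E ends k u v" "X \<subseteq> E" "card X < k"
  shows "(adjacent (E - X))\<^sup>*\<^sup>* u v"
proof (cases "u = v")
  case False
  then obtain P where "edge_disjoint_paths u v k P"
    using assms(1) by (auto simp: k_equiv_iff_edge_disjoint_paths)
  then have paths: "\<forall>i<k. is_uv_path V E ends u v (fst (P i)) (snd (P i))"
    and disjoint: "\<forall>i<k. \<forall>j<k. i \<noteq> j \<longrightarrow> set (snd (P i)) \<inter> set (snd (P j)) = {}"
    by (simp_all add: edge_disjoint_paths_def)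
  obtain i where "i < k" "set (snd (P i)) \<inter> X = {}"
    using pigeonhole_disjoint_family[OF finite_subset[OF assms(2) finite_E] assms(3) disjoint]
    by blast
  with paths have "is_uv_path V (E - X) ends u v (fst (P i)) (snd (P i))"
    unfolding is_uv_path_def is_path_def by blast
  then show ?thesis by (rule uv_path_connected)
qed simp

definition cut_edges :: "'v set \<Rightarrow> 'e set" where
  "cut_edges R = {e\<in>E. (fst (ends e) \<in> R) \<noteq> (snd (ends e) \<in> R)}"

lemma connected_after_cut_stays_inside:
  assumes "(adjacent (E - cut_edges R))\<^sup>*\<^sup>* u w" "u \<in> R"
  shows "w \<in> R"
  using assms
proof (induction rule: rtranclp_induct)
  case (step y z)
  then obtain e where "e \<in> E - cut_edges R" "joins ends e y z"
    unfolding adjacent_def by blast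
  with step show ?case unfolding cut_edges_def joins_def by auto
qed

subsection \<open>Darts and net outflow\<close>

text \<open>A dart is an edge with a direction: \<open>(e, True)\<close> traverses \<open>e\<close> from \<open>fst (ends e)\<close> to
  \<open>snd (ends e)\<close>, and \<open>(e, False)\<close> backwards.\<close>

definition dart_tail :: "'e \<times> bool \<Rightarrow> 'v" where
  "dart_tail d = (if snd d then fst (ends (fst d)) else snd (ends (fst d)))"

definition dart_head :: "'e \<times> bool \<Rightarrow> 'v" where
  "dart_head d = (if snd d then snd (ends (fst d)) else fst (ends (fst d)))"

definition dart_rev :: "'e \<times> bool \<Rightarrow> 'e \<times> bool" where
  "dart_rev d = (fst d, \<not> snd d)"

lemma dart_tail_rev [simp]: "dart_tail (dart_rev d) = dart_head d"
  and dart_head_rev [simp]: "dart_head (dart_rev d) = dart_tail d"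
  and dart_rev_rev [simp]: "dart_rev (dart_rev d) = d"
  and dart_rev_neq [simp]: "dart_rev d \<noteq> d"
  and fst_dart_rev [simp]: "fst (dart_rev d) = fst d"
  and dart_rev_mem_Times [simp]: "dart_rev d \<in> E' \<times> UNIV \<longleftrightarrow> d \<in> E' \<times> UNIV"
  by (simp_all add: dart_tail_def dart_head_def dart_rev_def prod_eq_iff mem_Times_iff)

lemma inj_dart_rev: "inj dart_rev"
  by (metis dart_rev_rev injI)

lemma fst_eq_dart_cases: "fst d' = fst d \<Longrightarrow> d' = d \<or> d' = dart_rev d"
  by (cases d; cases d') (auto simp: dart_rev_def)

lemma joins_dart: "joins ends (fst d) (dart_tail d) (dart_head d)"
  by (cases "snd d") (simp_all add: joins_def dart_tail_def dart_head_def)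

lemma dart_head_in_V: "fst d \<in> E \<Longrightarrow> dart_head d \<in> V"
  using multigraph unfolding multigraph_def dart_head_def by (cases "snd d") simp_all

lemma finite_darts: "(F :: ('e \<times> bool) set) \<subseteq> E \<times> UNIV \<Longrightarrow> finite F"
  by (erule finite_subset) (simp add: finite_E)

definition dart_balance :: "'v \<Rightarrow> 'e \<times> bool \<Rightarrow> int" where
  "dart_balance v d = of_bool (dart_tail d = v) - of_bool (dart_head d = v)"

definition net_out :: "('e \<times> bool) set \<Rightarrow> 'v \<Rightarrow> int" where
  "net_out F v = sum (dart_balance v) F"

lemma dart_balance_rev [simp]: "dart_balance v (dart_rev d) = - dart_balance v d"
  by (simp add: dart_balance_def)

lemma sum_dart_balance:
  "finite R \<Longrightarrow> (\<Sum>v\<in>R. dart_balance v d) = of_bool (dart_tail d \<in> R) - of_bool (dart_head d \<in> R)"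
  by (simp add: dart_balance_def sum_subtractf of_bool_def)

lemma sum_net_out:
  assumes "finite R" "finite F"
  shows "(\<Sum>v\<in>R. net_out F v) = (\<Sum>d\<in>F. of_bool (dart_tail d \<in> R) - of_bool (dart_head d \<in> R))"
proof -
  have "(\<Sum>v\<in>R. net_out F v) = (\<Sum>d\<in>F. \<Sum>v\<in>R. dart_balance v d)"
    unfolding net_out_def by (rule sum.swap)
  then show ?thesis using assms(1) by (simp add: sum_dart_balance)
qed

inductive dart_walk :: "('e \<times> bool) set \<Rightarrow> 'v \<Rightarrow> ('e \<times> bool) list \<Rightarrow> 'v \<Rightarrow> bool" for S where
  dart_walk_Nil: "dart_walk S x [] x"
| dart_walk_Cons: "d \<in> S \<Longrightarrow> dart_tail d = x \<Longrightarrow> dart_walk S (dart_head d) ds y \<Longrightarrow>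
    dart_walk S x (d # ds) y"

lemma dart_walk_set: "dart_walk S x ds y \<Longrightarrow> set ds \<subseteq> S"
  by (induction rule: dart_walk.induct) auto

lemma dart_walk_last: "dart_walk S x ds y \<Longrightarrow> last (x # map dart_head ds) = y"
  by (induction rule: dart_walk.induct) auto

lemma dart_walk_tail_nth:
  "dart_walk S x ds y \<Longrightarrow> i < length ds \<Longrightarrow> dart_tail (ds ! i) = (x # map dart_head ds) ! i"
  by (induction arbitrary: i rule: dart_walk.induct) (auto simp: nth_Cons split: nat.split)

lemma dart_walk_ends_visited:
  "dart_walk S x ds y \<Longrightarrow> d \<in> set ds \<Longrightarrow>
    {dart_tail d, dart_head d} \<subseteq> set (x # map dart_head ds)"
  by (induction rule: dart_walk.induct) auto

lemma dart_walk_sum_list_balance: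
  "dart_walk S x ds y \<Longrightarrow> sum_list (map (dart_balance v) ds) = of_bool (x = v) - of_bool (y = v)"
  by (induction rule: dart_walk.induct) (auto simp: dart_balance_def)

lemma dart_walk_distinct_edges:
  assumes "dart_walk S x ds y" "distinct (x # map dart_head ds)"
  shows "distinct (map fst ds)"
  using assms
proof (induction rule: dart_walk.induct)
  case (dart_walk_Cons d x ds y)
  have "fst d \<notin> fst ` set ds"
  proof
    assume "fst d \<in> fst ` set ds"
    then obtain d' where "d' \<in> set ds" "fst d' = fst d" by auto
    then have d': "d' \<in> set ds" "d' = d \<or> d' = dart_rev d"
      using fst_eq_dart_cases by blast+
    then have "x \<in> {dart_tail d', dart_head d'}"
      using dart_walk_Cons(2) by auto
    then have "x \<in> set (dart_head d # map dart_head ds)"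
      using dart_walk_ends_visited[OF dart_walk_Cons(3) d'(1)] by blast
    with dart_walk_Cons(5) show False by simp
  qed
  with dart_walk_Cons show ?case by simp
qed simp

lemma sum_balance_dart_walk:
  assumes "dart_walk S x ds y" "distinct (x # map dart_head ds)"
  shows "sum (dart_balance v) (set ds) = of_bool (x = v) - of_bool (y = v)"
proof -
  have "distinct ds" using dart_walk_distinct_edges[OF assms] distinct_map by blast
  then show ?thesis
    using dart_walk_sum_list_balance[OF assms(1)] by (simp add: sum_list_distinct_conv_sum_set)
qed

lemma dart_walk_is_uv_path:
  assumes "dart_walk S x ds y" "S \<subseteq> E \<times> UNIV" "distinct (x # map dart_head ds)" "x \<in> V"
  shows "is_uv_path V E ends x y (x # map dart_head ds) (map fst ds)"
proof -
  have darts: "set ds \<subseteq> E \<times> UNIV" using dart_walk_set[OF assms(1)] assms(2) by blast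
  then have "set (x # map dart_head ds) \<subseteq> V" using assms(4) dart_head_in_V by auto
  moreover have "joins ends (map fst ds ! i) ((x # map dart_head ds) ! i) ((x # map dart_head ds) ! Suc i)"
    if "i < length ds" for i
    using joins_dart[of "ds ! i"] dart_walk_tail_nth[OF assms(1) that] that by simp
  ultimately show ?thesis
    using darts assms(3) dart_walk_last[OF assms(1)]
    unfolding is_uv_path_def is_path_def by auto
qed

definition dart_step :: "('e \<times> bool) set \<Rightarrow> 'v \<Rightarrow> 'v \<Rightarrow> bool" where
  "dart_step S u w \<longleftrightarrow> (\<exists>d\<in>S. dart_tail d = u \<and> dart_head d = w)"

lemma dart_step_reachable_into:
  "(dart_step S)\<^sup>*\<^sup>* x u \<Longrightarrow> d \<in> S \<Longrightarrow> dart_tail d = u \<Longrightarrow> (dart_step S)\<^sup>*\<^sup>* x (dart_head d)"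
  by (metis dart_step_def rtranclp.rtrancl_into_rtrancl)

lemma finite_dart_step_reachable:
  assumes "S \<subseteq> E \<times> UNIV"
  shows "finite {v. (dart_step S)\<^sup>*\<^sup>* x v}"
proof -
  have "{v. (dart_step S)\<^sup>*\<^sup>* x v} \<subseteq> insert x V"
  proof
    fix v assume "v \<in> {v. (dart_step S)\<^sup>*\<^sup>* x v}"
    then have "(dart_step S)\<^sup>*\<^sup>* x v" by simp
    then show "v \<in> insert x V"
      by (induction rule: rtranclp_induct) (use assms dart_head_in_V in \<open>auto simp: dart_step_def\<close>)
  qed
  then show ?thesis using finite_V finite_subset by blast
qed

lemma dart_step_reachable_walk:
  assumes "(dart_step S)\<^sup>*\<^sup>* x y"
  obtains ds where "dart_walk S x ds y" "distinct (x # map dart_head ds)"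
proof -
  obtain xs where "rtrancl_path (dart_step S) x xs y" "distinct (x # xs)"
    using assms rtrancl_path_distinct by (metis rtranclp_eq_rtrancl_path)
  moreover have "rtrancl_path (dart_step S) x xs y \<Longrightarrow>
      \<exists>ds. dart_walk S x ds y \<and> map dart_head ds = xs" for x xs
  proof (induction rule: rtrancl_path.induct)
    case (step x y ys z)
    then obtain ds d where "dart_walk S y ds z" "map dart_head ds = ys"
      "d \<in> S" "dart_tail d = x" "dart_head d = y"
      by (auto simp: dart_step_def)
    then show ?case by (intro exI[of _ "d # ds"]) (auto intro: dart_walk_Cons)
  qed (auto intro: dart_walk_Nil)
  ultimately show ?thesis using that by blast
qed

subsection \<open>Unit-capacity flows\<close>

text \<open>An integral \<open>a\<close>--\<open>b\<close> flow of value \<open>j\<close> with unit edge capacities, represented by the set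
  of darts carrying one unit each; no edge carries flow in both directions.\<close>

definition flow :: "'v \<Rightarrow> 'v \<Rightarrow> ('e \<times> bool) set \<Rightarrow> nat \<Rightarrow> bool" where
  "flow a b F j \<longleftrightarrow> F \<subseteq> E \<times> UNIV \<and> (\<forall>d\<in>F. dart_rev d \<notin> F) \<and>
     (\<forall>v. net_out F v = (if v = a then int j else if v = b then - int j else 0))"

lemma flow_empty: "flow a b {} 0"
  by (simp add: flow_def net_out_def)

lemma flow_net_out_across:
  assumes "flow a b F j" "finite R" "a \<in> R" "b \<notin> R"
  shows "(\<Sum>v\<in>R. net_out F v) = int j"
proof -
  have "(\<Sum>v\<in>R. net_out F v) = (\<Sum>v\<in>R. if v = a then int j else 0)"
    using assms(1,4) by (intro sum.cong) (auto simp: flow_def)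
  then show ?thesis using assms(2,3) by simp
qed

text \<open>No flow dart leaves the set of vertices that flow darts reach from \<open>a\<close>, so the net outflow
  of that set is not positive; hence it must contain \<open>b\<close>.\<close>

lemma flow_reaches_sink:
  assumes "flow a b F j" "j \<ge> 1"
  shows "(dart_step F)\<^sup>*\<^sup>* a b"
proof (rule ccontr)
  define R where "R = {v. (dart_step F)\<^sup>*\<^sup>* a v}"
  have F: "F \<subseteq> E \<times> UNIV" using assms(1) by (simp add: flow_def)
  have R: "finite R" unfolding R_def using F by (rule finite_dart_step_reachable)
  assume "\<not> (dart_step F)\<^sup>*\<^sup>* a b"
  then have "(\<Sum>v\<in>R. net_out F v) = int j"
    using flow_net_out_across[OF assms(1) R] by (simp add: R_def)
  moreover have "(\<Sum>v\<in>R. net_out F v) \<le> 0"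
    unfolding sum_net_out[OF R finite_darts[OF F]]
    using dart_step_reachable_into by (intro sum_nonpos) (auto simp: R_def)
  ultimately show False using assms(2) by simp
qed

lemma flow_remove_path:
  assumes "flow a b F (Suc j)" "a \<noteq> b" "dart_walk F a ds b" "distinct (a # map dart_head ds)"
  shows "flow a b (F - set ds) j"
proof -
  have F: "F \<subseteq> E \<times> UNIV" using assms(1) by (simp add: flow_def)
  have "net_out (F - set ds) v = net_out F v - sum (dart_balance v) (set ds)" for v
    unfolding net_out_def by (rule sum_diff[OF finite_darts[OF F] dart_walk_set[OF assms(3)]])
  then show ?thesis
    using assms(1,2) F sum_balance_dart_walk[OF assms(3,4)] by (auto simp: flow_def)
qed

text \<open>Pushing one more unit along the darts \<open>P\<close>: flow on a reversed dart is cancelled, and the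
  remaining darts of \<open>P\<close> start to carry flow.\<close>

definition augment :: "('e \<times> bool) set \<Rightarrow> ('e \<times> bool) set \<Rightarrow> ('e \<times> bool) set" where
  "augment F P = (F - dart_rev ` P) \<union> {d\<in>P. dart_rev d \<notin> F}"

lemma net_out_augment:
  assumes "finite F" "finite P" "P \<inter> F = {}"
  shows "net_out (augment F P) v = net_out F v + net_out P v"
proof -
  define P1 where "P1 = {d\<in>P. dart_rev d \<in> F}"
  define P2 where "P2 = {d\<in>P. dart_rev d \<notin> F}"
  have split: "augment F P = (F - dart_rev ` P1) \<union> P2" "(F - dart_rev ` P1) \<inter> P2 = {}"
    using assms(3) by (auto simp: augment_def P1_def P2_def image_iff)
  have P: "P = P1 \<union> P2" "P1 \<inter> P2 = {}" "finite P1" "finite P2"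
    using assms(2) by (auto simp: P1_def P2_def)
  have rev_P1: "dart_rev ` P1 \<subseteq> F" by (auto simp: P1_def)
  have "sum (dart_balance v) (dart_rev ` P1) = - sum (dart_balance v) P1"
    using inj_on_subset[OF inj_dart_rev subset_UNIV]
    by (simp add: sum.reindex sum_negf)
  moreover have "sum (dart_balance v) (F - dart_rev ` P1) =
      sum (dart_balance v) F - sum (dart_balance v) (dart_rev ` P1)"
    using sum_diff[OF assms(1) rev_P1] .
  ultimately show ?thesis
    unfolding net_out_def split(1) using split(2) P assms(1)
    by (simp add: sum.union_disjoint)
qed

lemma augment_antiparallel_free:
  assumes "\<forall>d\<in>F. dart_rev d \<notin> F" "P \<inter> F = {}" "inj_on fst P"
  shows "\<forall>d\<in>augment F P. dart_rev d \<notin> augment F P"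
proof -
  have "dart_rev d \<notin> P" if "d \<in> P" for d
  proof
    assume "dart_rev d \<in> P"
    with that have "dart_rev d = d" by (intro inj_onD[OF assms(3)]) simp_all
    then show False by simp
  qed
  then show ?thesis using assms(1) by (auto simp: augment_def)
qed

lemma flow_augment:
  assumes "flow a b F j" "a \<noteq> b" "dart_walk (E \<times> UNIV - F) a ds b" "distinct (a # map dart_head ds)"
  shows "flow a b (augment F (set ds)) (Suc j)"
proof -
  have F: "F \<subseteq> E \<times> UNIV" "\<forall>d\<in>F. dart_rev d \<notin> F" using assms(1) by (simp_all add: flow_def)
  have P: "set ds \<subseteq> E \<times> UNIV" "set ds \<inter> F = {}" using dart_walk_set[OF assms(3)] by auto
  have "inj_on fst (set ds)"
    using dart_walk_distinct_edges[OF assms(3,4)] by (simp add: distinct_map)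
  then have "\<forall>d\<in>augment F (set ds). dart_rev d \<notin> augment F (set ds)"
    using augment_antiparallel_free F(2) P(2) by blast
  moreover have "augment F (set ds) \<subseteq> E \<times> UNIV" using F(1) P(1) by (auto simp: augment_def)
  moreover have "net_out (augment F (set ds)) v = net_out F v + (of_bool (a = v) - of_bool (b = v))"
    for v
    using net_out_augment[OF finite_darts[OF F(1)] _ P(2)] sum_balance_dart_walk[OF assms(3,4)]
    by (simp add: net_out_def)
  ultimately show ?thesis using assms(1,2) by (auto simp: flow_def)
qed

text \<open>If \<open>R\<close> cannot be left along a dart without flow, every edge leaving \<open>R\<close> carries a unit of
  flow out of \<open>R\<close> and none carries flow into \<open>R\<close>; so these edges are counted by the value.\<close>

lemma card_cut_edges_le_flow_value:
  assumes "flow a b F j" "finite R" "a \<in> R" "b \<notin> R"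
    and closed: "\<And>d. d \<in> E \<times> UNIV - F \<Longrightarrow> dart_tail d \<in> R \<Longrightarrow> dart_head d \<in> R"
  shows "card (cut_edges R) \<le> j"
proof -
  define L where "L = {d\<in>F. dart_tail d \<in> R \<and> dart_head d \<notin> R}"
  have F: "F \<subseteq> E \<times> UNIV" "\<forall>d\<in>F. dart_rev d \<notin> F" using assms(1) by (simp_all add: flow_def)
  have no_entering: "dart_tail d \<in> R" if "d \<in> F" "dart_head d \<in> R" for d
    using closed[of "dart_rev d"] F that by auto
  have "cut_edges R \<subseteq> fst ` L"
  proof
    fix e assume e: "e \<in> cut_edges R"
    define d where "d = (e, fst (ends e) \<in> R)"
    have "dart_tail d \<in> R" "dart_head d \<notin> R" "fst d \<in> E"
      using e by (auto simp: cut_edges_def d_def dart_tail_def dart_head_def)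
    then have "d \<in> L" using closed[of d] by (auto simp: L_def mem_Times_iff)
    then show "e \<in> fst ` L" by (force simp: d_def)
  qed
  have "int j = (\<Sum>d\<in>F. of_bool (dart_tail d \<in> R) - of_bool (dart_head d \<in> R))"
    using flow_net_out_across[OF assms(1-4)] sum_net_out[OF assms(2) finite_darts[OF F(1)]] by simp
  also have "\<dots> = (\<Sum>d\<in>F. of_bool (d \<in> L))"
    using no_entering by (intro sum.cong) (auto simp: L_def)
  also have "\<dots> = int (card L)"
    using finite_darts[OF F(1)] by (simp add: L_def Int_def)
  finally have "card L = j" by simp
  moreover have "finite L" using finite_darts[OF F(1)] by (simp add: L_def)
  ultimately show ?thesis
    using \<open>cut_edges R \<subseteq> fst ` L\<close> card_image_le card_mono le_trans finite_imageI by metis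
qed

lemma saturated_flow_separator:
  assumes "flow a b F j" "\<not> (dart_step (E \<times> UNIV - F))\<^sup>*\<^sup>* a b"
  shows "\<exists>X\<subseteq>E. card X \<le> j \<and> \<not> (adjacent (E - X))\<^sup>*\<^sup>* a b"
proof -
  define R where "R = {v. (dart_step (E \<times> UNIV - F))\<^sup>*\<^sup>* a v}"
  have "finite R" unfolding R_def by (rule finite_dart_step_reachable) blast
  moreover have "a \<in> R" "b \<notin> R" using assms(2) by (simp_all add: R_def)
  moreover have "dart_head d \<in> R" if "d \<in> E \<times> UNIV - F" "dart_tail d \<in> R" for d
    using that dart_step_reachable_into by (simp add: R_def)
  ultimately have "card (cut_edges R) \<le> j"
    using card_cut_edges_le_flow_value[OF assms(1)] by blast
  moreover have "\<not> (adjacent (E - cut_edges R))\<^sup>*\<^sup>* a b"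
    using connected_after_cut_stays_inside \<open>a \<in> R\<close> \<open>b \<notin> R\<close> by blast
  moreover have "cut_edges R \<subseteq> E" by (auto simp: cut_edges_def)
  ultimately show ?thesis by blast
qed

subsection \<open>Edge version of Menger's theorem\<close>

text \<open>Peel off the \<open>a\<close>--\<open>b\<close> paths of a flow one at a time; darts of distinct paths lie on distinct
  edges because the flow is antiparallel-free.\<close>

lemma flow_edge_disjoint_paths:
  assumes "a \<in> V" "a \<noteq> b" "flow a b F j"
  shows "\<exists>P. edge_disjoint_paths a b j P \<and> (\<forall>i<j. set (snd (P i)) \<subseteq> fst ` F)"
  using assms(3)
proof (induction j arbitrary: F)
  case 0
  show ?case by (simp add: edge_disjoint_paths_def)
next
  case (Suc j)
  have F: "F \<subseteq> E \<times> UNIV" "\<forall>d\<in>F. dart_rev d \<notin> F" using Suc.prems by (simp_all add: flow_def)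
  have "(dart_step F)\<^sup>*\<^sup>* a b" using flow_reaches_sink[OF Suc.prems] by simp
  then obtain ds where ds: "dart_walk F a ds b" "distinct (a # map dart_head ds)"
    by (rule dart_step_reachable_walk)
  obtain P where P: "edge_disjoint_paths a b j P" "\<forall>i<j. set (snd (P i)) \<subseteq> fst ` (F - set ds)"
    using Suc.IH[OF flow_remove_path[OF Suc.prems assms(2) ds]] by blast
  have "fst d \<noteq> fst d'" if "d \<in> F - set ds" "d' \<in> set ds" for d d'
    using fst_eq_dart_cases[of d d'] F(2) dart_walk_set[OF ds(1)] that by auto
  then have "fst ` (F - set ds) \<inter> fst ` set ds = {}" by blast
  then have "\<forall>i<j. set (snd (P i)) \<inter> set (map fst ds) = {}"
    using P(2) by (simp add: disjoint_iff subset_iff)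
  then have "edge_disjoint_paths a b (Suc j) (P(j := (a # map dart_head ds, map fst ds)))"
    by (rule edge_disjoint_paths_extend[OF P(1) dart_walk_is_uv_path[OF ds(1) F(1) ds(2) assms(1)]])
  moreover have "\<forall>i<Suc j. set (snd ((P(j := (a # map dart_head ds, map fst ds))) i)) \<subseteq> fst ` F"
    using P(2) dart_walk_set[OF ds(1)] by (auto simp: less_Suc_eq)
  ultimately show ?case by blast
qed

lemma flow_or_small_separator:
  assumes "a \<noteq> b" "j \<le> k"
  shows "(\<exists>F. flow a b F j) \<or> (\<exists>X\<subseteq>E. card X < k \<and> \<not> (adjacent (E - X))\<^sup>*\<^sup>* a b)"
  using assms(2)
proof (induction j)
  case 0
  show ?case using flow_empty by blast
next
  case (Suc j)
  show ?case
  proof (cases "\<exists>F. flow a b F j")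
    case True
    then obtain F where F: "flow a b F j" by blast
    show ?thesis
    proof (cases "(dart_step (E \<times> UNIV - F))\<^sup>*\<^sup>* a b")
      case True
      then obtain ds where "dart_walk (E \<times> UNIV - F) a ds b" "distinct (a # map dart_head ds)"
        by (rule dart_step_reachable_walk)
      then show ?thesis using flow_augment[OF F assms(1)] by blast
    next
      case False
      then obtain X where "X \<subseteq> E" "card X \<le> j" "\<not> (adjacent (E - X))\<^sup>*\<^sup>* a b"
        using saturated_flow_separator[OF F] by blast
      moreover have "j < k" using Suc.prems by simp
      ultimately show ?thesis by auto
    qed
  next
    case False
    then show ?thesis using Suc by simp
  qed
qed

theorem edge_menger:
  assumes "a \<in> V" "\<not> k_equiv V E ends k a b"
  obtains X where "X \<subseteq> E" "card X < k" "\<not> (adjacent (E - X))\<^sup>*\<^sup>* a b"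
proof -
  have "a \<noteq> b" using assms(2) by (simp add: k_equiv_def)
  moreover have "\<not> flow a b F k" for F
  proof
    assume "flow a b F k"
    then obtain P where "edge_disjoint_paths a b k P"
      using flow_edge_disjoint_paths[OF assms(1) \<open>a \<noteq> b\<close>] by blast
    with assms(2) show False by (simp add: k_equiv_iff_edge_disjoint_paths)
  qed
  ultimately show ?thesis
    using flow_or_small_separator[OF \<open>a \<noteq> b\<close> order.refl] that by meson
qed

end

theorem lemma9:
  fixes V :: "'v set" and E :: "'e set" and ends :: "'e \<Rightarrow> 'v \<times> 'v"
    and k :: nat and A B :: "'v set"
  assumes "multigraph V E ends"
    and "k \<ge> 1"
    and "A \<subseteq> V" and "B \<subseteq> V"
    and "A \<noteq> {}" and "B \<noteq> {}"
    and "\<forall>a\<in>A. \<forall>a'\<in>A. k_equiv V E ends k a a'"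
    and "\<forall>b\<in>B. \<forall>b'\<in>B. k_equiv V E ends k b b'"
    and "\<forall>a\<in>A. \<forall>b\<in>B. \<not> k_equiv V E ends k a b"
  shows "\<exists>X. X \<subseteq> E \<and> card X \<le> k - 1 \<and> \<not> has_AB_path V (E - X) ends A B"
proof -
  interpret finite_multigraph V E ends by (rule finite_multigraph.intro) (rule assms(1))
  obtain a b where a: "a \<in> A" and b: "b \<in> B" using assms(5,6) by blast
  have "a \<in> V" "\<not> k_equiv V E ends k a b" using a b assms(3,9) by auto
  then obtain X where X: "X \<subseteq> E" "card X < k" and sep: "\<not> (adjacent (E - X))\<^sup>*\<^sup>* a b"
    by (rule edge_menger)
  have "\<not> has_AB_path V (E - X) ends A B"
  proof
    assume "has_AB_path V (E - X) ends A B"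
    then obtain a' b' vs es where a': "a' \<in> A" and b': "b' \<in> B"
      and path: "is_uv_path V (E - X) ends a' b' vs es"
      unfolding has_AB_path_def by blast
    from path have "(adjacent (E - X))\<^sup>*\<^sup>* a' b'" by (rule uv_path_connected)
    moreover have "(adjacent (E - X))\<^sup>*\<^sup>* a a'" "(adjacent (E - X))\<^sup>*\<^sup>* b' b"
      using k_equiv_connected_after_deletion[OF _ X] assms(7,8) a a' b b' by simp_all
    ultimately show False using sep by (meson rtranclp_trans)
  qed
  with X show ?thesis by auto
qed

end
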